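(* Let $P$ and $Q$ be real polynomials. Then $P^2\preceq P$ holds if and only if $0\preceq P\preceq1$. Furthermore, if $P^2\preceq P$ and $0\preceq Q\preceq P$, then $Q^2\preceq Q$.
   Context: For real polynomials $P,Q$ (in finitely many variables), $P\preceq Q$ means $Q=P+\sum_{i=1}^m R_i^2$ for some polynomials $R_1,\dots,R_m$; $0\preceq P$ means $P$ is a sum of squares and $P\preceq1$ means $1-P$ is a sum of squares. *)

theory Defs
  imports Complex_Main "HOL-Library.Poly_Mapping"
begin

text \<open>Real polynomials in finitely many variables: the standard representation of
  the polynomial ring R[x_0, x_1, ...] as finitely supported maps from monomials
  (finitely supported exponent vectors nat \<Rightarrow>0 nat) to coefficients.\<close>
type_synonym rpoly = "(nat \<Rightarrow>\<^sub>0 nat) \<Rightarrow>\<^sub>0 real"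

definition is_sos :: "rpoly \<Rightarrow> bool" where
  "is_sos P \<longleftrightarrow> (\<exists>Rs :: rpoly list. P = sum_list (map (\<lambda>R. R ^ 2) Rs))"

definition sos_le :: "rpoly \<Rightarrow> rpoly \<Rightarrow> bool" (infix "\<preceq>" 50) where
  "P \<preceq> Q \<longleftrightarrow> (\<exists>Rs :: rpoly list. Q = P + sum_list (map (\<lambda>R. R ^ 2) Rs))"

end

theory Submission
  imports Defs
begin

text \<open>Write \<open>P \<preceq> Q\<close> as "\<open>Q - P\<close> is a sum of squares". Sums of squares form a cone closed
  under products, and the two identities \<open>P = P\<^sup>2 + (P - P\<^sup>2)\<close>,
  \<open>1 - P = (1 - P)\<^sup>2 + (P - P\<^sup>2)\<close> together with \<open>P - P\<^sup>2 = P (1 - P)\<close> give the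
  equivalence \<open>P\<^sup>2 \<preceq> P \<longleftrightarrow> 0 \<preceq> P \<preceq> 1\<close>. The second claim then follows from transitivity:
  \<open>Q \<preceq> P \<preceq> 1\<close>.\<close>

definition sum_of_squares :: "'a::comm_ring_1 \<Rightarrow> bool" where
  "sum_of_squares x \<longleftrightarrow> (\<exists>Rs. x = sum_list (map (\<lambda>R. R ^ 2) Rs))"

lemma sum_of_squares_0: "sum_of_squares 0"
  unfolding sum_of_squares_def by (rule exI[of _ "[]"]) simp

lemma sum_of_squares_power2: "sum_of_squares (x ^ 2)"
  unfolding sum_of_squares_def by (rule exI[of _ "[x]"]) simp

lemma sum_of_squares_add:
  "sum_of_squares a \<Longrightarrow> sum_of_squares b \<Longrightarrow> sum_of_squares (a + b)"
  unfolding sum_of_squares_def by (metis map_append sum_list_append)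

lemma power2_mult_sum_list_squares:
  "(x::'a::comm_ring_1) ^ 2 * sum_list (map (\<lambda>R. R ^ 2) Ss)
     = sum_list (map (\<lambda>R. R ^ 2) (map ((*) x) Ss))"
  by (induction Ss) (auto simp: algebra_simps power_mult_distrib)

lemma sum_of_squares_mult:
  assumes "sum_of_squares a" and b: "sum_of_squares b"
  shows "sum_of_squares (a * b)"
proof -
  obtain Rs where a: "a = sum_list (map (\<lambda>R. R ^ 2) Rs)"
    using assms(1) unfolding sum_of_squares_def by blast
  have "sum_of_squares (sum_list (map (\<lambda>R. R ^ 2) Rs) * b)"
  proof (induction Rs)
    case Nil
    show ?case using sum_of_squares_0 by simp
  next
    case (Cons x Rs)
    have "sum_of_squares (x ^ 2 * b)"
      using b unfolding sum_of_squares_def by (auto simp only: power2_mult_sum_list_squares)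
    with Cons show ?case by (simp add: distrib_right sum_of_squares_add)
  qed
  then show ?thesis using a by simp
qed

lemma sos_le_iff: "P \<preceq> Q \<longleftrightarrow> sum_of_squares (Q - P)"
  unfolding sos_le_def sum_of_squares_def by (auto simp: algebra_simps)

lemma sos_le_trans: "P \<preceq> Q \<Longrightarrow> Q \<preceq> R \<Longrightarrow> P \<preceq> R"
proof -
  assume "P \<preceq> Q" "Q \<preceq> R"
  then have "sum_of_squares ((R - Q) + (Q - P))" by (simp only: sos_le_iff sum_of_squares_add)
  moreover have "(R - Q) + (Q - P) = R - P" by simp
  ultimately show "P \<preceq> R" by (simp only: sos_le_iff)
qed

lemma power2_sos_le_self_iff: "P ^ 2 \<preceq> P \<longleftrightarrow> 0 \<preceq> P \<and> P \<preceq> 1"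
proof
  assume "P ^ 2 \<preceq> P"
  then have gap: "sum_of_squares (P - P ^ 2)" by (simp add: sos_le_iff)
  have "sum_of_squares (P ^ 2 + (P - P ^ 2))" using sum_of_squares_add[OF sum_of_squares_power2 gap] .
  then have "sum_of_squares P" by simp
  moreover have "(1 - P) ^ 2 + (P - P ^ 2) = 1 - P" by (simp add: power2_eq_square algebra_simps)
  then have "sum_of_squares (1 - P)"
    using sum_of_squares_add[OF sum_of_squares_power2[of "1 - P"] gap] by (simp only:)
  ultimately show "0 \<preceq> P \<and> P \<preceq> 1" by (simp add: sos_le_iff)
next
  assume "0 \<preceq> P \<and> P \<preceq> 1"
  then have "sum_of_squares (P * (1 - P))" by (simp add: sos_le_iff sum_of_squares_mult)
  moreover have "P * (1 - P) = P - P ^ 2" by (simp add: power2_eq_square algebra_simps)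
  ultimately show "P ^ 2 \<preceq> P" by (simp add: sos_le_iff)
qed

theorem lemmaA1:
  fixes P Q :: rpoly
  shows "(P ^ 2 \<preceq> P \<longleftrightarrow> (0 \<preceq> P \<and> P \<preceq> 1))
     \<and> ((P ^ 2 \<preceq> P \<and> 0 \<preceq> Q \<and> Q \<preceq> P) \<longrightarrow> Q ^ 2 \<preceq> Q)"
proof (intro conjI impI)
  show "P ^ 2 \<preceq> P \<longleftrightarrow> 0 \<preceq> P \<and> P \<preceq> 1" by (rule power2_sos_le_self_iff)
next
  assume hyps: "P ^ 2 \<preceq> P \<and> 0 \<preceq> Q \<and> Q \<preceq> P"
  then have "Q \<preceq> 1" using power2_sos_le_self_iff sos_le_trans by blast
  with hyps show "Q ^ 2 \<preceq> Q" using power2_sos_le_self_iff by blast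
qed

end
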